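(* Fix a deck $\beta_1,\ldots,\beta_B\in\mathscr{B}$ and let $\mathcal{B}=\{1,\ldots,B\}$. Consider the binary linear program: minimize $\sum_{i,j\in\mathcal{N}, i\neq j}x_{i,j}$ over $x\in\{0,1\}^{\mathcal{N}\times\mathcal{N}}$ subject to (1) $\sum_{j\in\mathcal{N}}x_{i,j}=1$ for all $i\in\mathcal{N}$; (2) $\sum_{i\in\mathcal{N}}x_{i,j}=1$ for all $j\in\mathcal{N}$; (3) $\sum_{i\in\mathcal{N}}x_{i,i}\le|\mathcal{N}|-2$; (4) $\sum_{i\in\mathcal{N}_c}\sum_{j\in\beta_b}x_{i,j}\le v_c$ for all $b\in\mathcal{B}$, $c\in\mathcal{C}$; (5) $x_{i,j}=0$ for all $i,j\in\mathcal{N}$ with $|\{b\in\mathcal{B}: i\in\beta_b\}|\neq|\{b\in\mathcal{B}: j\in\beta_b\}|$. Let $x$ be an optimal solution and let $\sigma:\mathcal{N}\to\mathcal{N}$ be defined by $\sigma(i)=j$ iff $x_{i,j}=1$. Then $\sigma\in\Sigma$, $T^\sigma(\beta_1,\ldots,\beta_B)=T^*(\beta_1,\ldots,\beta_B)$, and $\sigma$ is minimal, i.e. the graph $\mathscr{G}^\sigma$ has exactly one connected component.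
   Context: A ballot style consists of contests $\mathcal{C}=\{1,\ldots,C\}$, candidates $\mathcal{N}=\{1,\ldots,N\}$ partitioned into nonempty sets $\mathcal{N}_c$ ($c\in\mathcal{C}$), and positive integers $v_c$. A filled-out ballot is a subset $\beta\subseteq\mathcal{N}$; $\mathscr{B}=\{\beta\subseteq\mathcal{N}: |\mathcal{N}_c\cap\beta|\le v_c\ \forall c\}$. For $i\in\mathcal{N}_c$: $T^*_i(\beta_1,\ldots,\beta_B)=\sum_{b=1}^B\mathbb{I}\{i\in\beta_b\text{ and }|\mathcal{N}_c\cap\beta_b|\le v_c\}$, and for a bijection $\sigma$ of $\mathcal{N}$, $T^\sigma_i(\beta_1,\ldots,\beta_B)=\sum_{b=1}^B\mathbb{I}\{\sigma(i)\in\beta_b\text{ and }|\{\sigma(j)\in\beta_b: j\in\mathcal{N}_c\}|\le v_c\}$. $\Sigma$ is the set of non-identity bijections $\mathcal{N}\to\mathcal{N}$. For $\sigma\in\Sigma$, $\mathscr{G}^\sigma=(\mathscr{V}^\sigma,\mathscr{E}^\sigma)$ is the undirected graph with vertex set $\mathscr{V}^\sigma=\{c\in\mathcal{C}:\exists i\in\mathcal{N}_c,\ \sigma(i)\neq i\}$ and edge set $\mathscr{E}^\sigma=\{(c,c'): \exists i\in\mathcal{N}_c, i'\in\mathcal{N}_{c'}\text{ with }\sigma(i)=i'\text{ or }\sigma(i')=i\}$. *)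

theory Defs
  imports Main
begin

(* Candidates are 1..N, contests are 1..C; cand c is the candidate set N_c,
   v c the vote limit of contest c, beta b the b-th ballot (b = 1..B). *)

definition is_ballot_style :: "nat \<Rightarrow> nat \<Rightarrow> (nat \<Rightarrow> nat set) \<Rightarrow> (nat \<Rightarrow> nat) \<Rightarrow> bool" where
  "is_ballot_style N C cand v \<longleftrightarrow>
     (\<forall>c\<in>{1..C}. cand c \<noteq> {}) \<and>
     (\<forall>c\<in>{1..C}. \<forall>c'\<in>{1..C}. c \<noteq> c' \<longrightarrow> cand c \<inter> cand c' = {}) \<and>
     (\<Union>c\<in>{1..C}. cand c) = {1..N} \<and>
     (\<forall>c\<in>{1..C}. v c > 0)"

definition valid_ballots :: "nat \<Rightarrow> nat \<Rightarrow> (nat \<Rightarrow> nat set) \<Rightarrow> (nat \<Rightarrow> nat) \<Rightarrow> nat set set" where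
  "valid_ballots N C cand v = {\<beta>. \<beta> \<subseteq> {1..N} \<and> (\<forall>c\<in>{1..C}. card (cand c \<inter> \<beta>) \<le> v c)}"

definition Tstar :: "(nat \<Rightarrow> nat set) \<Rightarrow> (nat \<Rightarrow> nat) \<Rightarrow> nat \<Rightarrow> (nat \<Rightarrow> nat set) \<Rightarrow> nat \<Rightarrow> nat \<Rightarrow> nat" where
  "Tstar cand v B beta c i =
     card {b\<in>{1..B}. i \<in> beta b \<and> card (cand c \<inter> beta b) \<le> v c}"

definition Tsigma :: "(nat \<Rightarrow> nat) \<Rightarrow> (nat \<Rightarrow> nat set) \<Rightarrow> (nat \<Rightarrow> nat) \<Rightarrow> nat \<Rightarrow> (nat \<Rightarrow> nat set) \<Rightarrow> nat \<Rightarrow> nat \<Rightarrow> nat" where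
  "Tsigma \<sigma> cand v B beta c i =
     card {b\<in>{1..B}. \<sigma> i \<in> beta b \<and> card {\<sigma> j |j. j \<in> cand c \<and> \<sigma> j \<in> beta b} \<le> v c}"

definition Sigma_set :: "nat \<Rightarrow> (nat \<Rightarrow> nat) set" where
  "Sigma_set N = {\<sigma>. bij_betw \<sigma> {1..N} {1..N} \<and> (\<exists>i\<in>{1..N}. \<sigma> i \<noteq> i)}"

definition graph_V :: "(nat \<Rightarrow> nat) \<Rightarrow> nat \<Rightarrow> (nat \<Rightarrow> nat set) \<Rightarrow> nat set" where
  "graph_V \<sigma> C cand = {c\<in>{1..C}. \<exists>i\<in>cand c. \<sigma> i \<noteq> i}"

definition graph_E :: "(nat \<Rightarrow> nat) \<Rightarrow> nat \<Rightarrow> (nat \<Rightarrow> nat set) \<Rightarrow> (nat \<times> nat) set" where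
  "graph_E \<sigma> C cand = {(c, c'). c \<in> {1..C} \<and> c' \<in> {1..C} \<and>
      (\<exists>i\<in>cand c. \<exists>i'\<in>cand c'. \<sigma> i = i' \<or> \<sigma> i' = i)}"

definition one_component :: "'a set \<Rightarrow> ('a \<times> 'a) set \<Rightarrow> bool" where
  "one_component V E \<longleftrightarrow> V \<noteq> {} \<and>
     (\<forall>a\<in>V. \<forall>b\<in>V. (a, b) \<in> (Restr (E \<union> E\<inverse>) V)\<^sup>*)"

definition feasible :: "nat \<Rightarrow> nat \<Rightarrow> (nat \<Rightarrow> nat set) \<Rightarrow> (nat \<Rightarrow> nat) \<Rightarrow> nat \<Rightarrow> (nat \<Rightarrow> nat set)
    \<Rightarrow> (nat \<Rightarrow> nat \<Rightarrow> int) \<Rightarrow> bool" where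
  "feasible N C cand v B beta x \<longleftrightarrow>
     (\<forall>i\<in>{1..N}. \<forall>j\<in>{1..N}. x i j \<in> {0, 1}) \<and>
     (\<forall>i\<in>{1..N}. (\<Sum>j\<in>{1..N}. x i j) = 1) \<and>
     (\<forall>j\<in>{1..N}. (\<Sum>i\<in>{1..N}. x i j) = 1) \<and>
     (\<Sum>i\<in>{1..N}. x i i) \<le> int N - 2 \<and>
     (\<forall>b\<in>{1..B}. \<forall>c\<in>{1..C}. (\<Sum>i\<in>cand c. \<Sum>j\<in>beta b. x i j) \<le> int (v c)) \<and>
     (\<forall>i\<in>{1..N}. \<forall>j\<in>{1..N}.
        card {b\<in>{1..B}. i \<in> beta b} \<noteq> card {b\<in>{1..B}. j \<in> beta b} \<longrightarrow> x i j = 0)"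

definition objective :: "nat \<Rightarrow> (nat \<Rightarrow> nat \<Rightarrow> int) \<Rightarrow> int" where
  "objective N x = (\<Sum>i\<in>{1..N}. \<Sum>j\<in>{1..N} - {i}. x i j)"

definition optimal :: "nat \<Rightarrow> nat \<Rightarrow> (nat \<Rightarrow> nat set) \<Rightarrow> (nat \<Rightarrow> nat) \<Rightarrow> nat \<Rightarrow> (nat \<Rightarrow> nat set)
    \<Rightarrow> (nat \<Rightarrow> nat \<Rightarrow> int) \<Rightarrow> bool" where
  "optimal N C cand v B beta x \<longleftrightarrow> feasible N C cand v B beta x \<and>
     (\<forall>y. feasible N C cand v B beta y \<longrightarrow> objective N x \<le> objective N y)"

end

theory Submission
  imports Defs
begin

text \<open>An optimal solution is the permutation matrix of a bijection \<sigma>, and the objective counts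
  the candidates that \<sigma> moves. Constraint (4) says that no contest is overvoted on a ballot read
  through \<sigma>, and (5) that every candidate has as many marks as its image; together with the validity
  of the deck this gives \<open>T\<^sup>\<sigma> = T\<^sup>*\<close>. If \<open>\<G>\<^sup>\<sigma>\<close> were disconnected, let K be the vertex set of one
  component: \<sigma> maps the candidates of the contests in K onto themselves, so restricting \<sigma> to them
  (and fixing everything else) is again feasible, because the remaining contests then see the original,
  valid ballots. It moves strictly fewer candidates, contradicting optimality.\<close>

definition perm_matrix :: "(nat \<Rightarrow> nat) \<Rightarrow> nat \<Rightarrow> nat \<Rightarrow> int" where
  "perm_matrix f i j = of_bool (f i = j)"

definition moved :: "(nat \<Rightarrow> nat) \<Rightarrow> nat set \<Rightarrow> nat set" where
  "moved f A = {i\<in>A. f i \<noteq> i}"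

definition restrict_perm :: "(nat \<Rightarrow> nat) \<Rightarrow> nat set \<Rightarrow> nat \<Rightarrow> nat" where
  "restrict_perm f S i = (if i \<in> S then f i else i)"

lemma sum_of_bool_eq_card:
  "finite A \<Longrightarrow> (\<Sum>i\<in>A. of_bool (P i) :: int) = int (card {i\<in>A. P i})"
  by (simp add: Int_def)

lemma sum_perm_matrix_row:
  "finite A \<Longrightarrow> (\<Sum>j\<in>A. perm_matrix f i j) = of_bool (f i \<in> A)"
  unfolding perm_matrix_def by simp

lemma sum_perm_matrix_col:
  "finite A \<Longrightarrow> (\<Sum>i\<in>A. perm_matrix f i j) = int (card {i\<in>A. f i = j})"
  unfolding perm_matrix_def by (rule sum_of_bool_eq_card)

lemma card_fixed_points:
  assumes "finite A"
  shows "card {i\<in>A. f i = i} = card A - card (moved f A)"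
proof -
  have "{i\<in>A. f i = i} = A - moved f A"
    by (auto simp: moved_def)
  then show ?thesis
    using assms by (simp add: card_Diff_subset moved_def)
qed

lemma two_le_card_moved:
  assumes "finite S" "inj_on f S" "f ` S \<subseteq> S" "i \<in> S" "f i \<noteq> i"
  shows "2 \<le> card (moved f S)"
proof -
  have "f (f i) \<noteq> f i"
    using assms inj_onD[of f S "f i" i] by blast
  then have "{i, f i} \<subseteq> moved f S"
    using assms unfolding moved_def by auto
  then have "card {i, f i} \<le> card (moved f S)"
    by (rule card_mono[rotated]) (simp add: moved_def \<open>finite S\<close>)
  then show ?thesis using \<open>f i \<noteq> i\<close> by simp
qed

lemma objective_perm_matrix:
  assumes "\<forall>i\<in>{1..N}. f i \<in> {1..N}"
  shows "objective N (perm_matrix f) = int (card (moved f {1..N}))"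
proof -
  have "objective N (perm_matrix f) = (\<Sum>i\<in>{1..N}. of_bool (f i \<noteq> i))"
    unfolding objective_def using assms by (intro sum.cong) (auto simp: sum_perm_matrix_row)
  also have "\<dots> = int (card (moved f {1..N}))"
    unfolding moved_def by (rule sum_of_bool_eq_card) simp
  finally show ?thesis .
qed

lemma permutation_of_perm_matrix:
  assumes x01: "\<forall>i\<in>{1..N}. \<forall>j\<in>{1..N}. x i j \<in> {0, 1}"
    and row: "\<forall>i\<in>{1..N}. (\<Sum>j\<in>{1..N}. x i j) = (1::int)"
    and col: "\<forall>j\<in>{1..N}. (\<Sum>i\<in>{1..N}. x i j) = 1"
    and \<sigma>: "\<forall>i\<in>{1..N}. \<forall>j\<in>{1..N}. \<sigma> i = j \<longleftrightarrow> x i j = 1"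
  shows "bij_betw \<sigma> {1..N} {1..N}" and "\<forall>i\<in>{1..N}. \<forall>j\<in>{1..N}. x i j = perm_matrix \<sigma> i j"
proof -
  show x_eq: "\<forall>i\<in>{1..N}. \<forall>j\<in>{1..N}. x i j = perm_matrix \<sigma> i j"
    using x01 \<sigma> unfolding perm_matrix_def by fastforce
  have maps: "\<sigma> i \<in> {1..N}" if i: "i \<in> {1..N}" for i
  proof (rule ccontr)
    assume "\<sigma> i \<notin> {1..N}"
    then have "\<forall>j\<in>{1..N}. x i j = 0"
      using x_eq i unfolding perm_matrix_def by auto
    then have "(\<Sum>j\<in>{1..N}. x i j) = 0" by simp
    with row i show False by simp
  qed
  have "inj_on \<sigma> {1..N}"
  proof (rule inj_onI, rule ccontr)
    fix i i' assume i: "i \<in> {1..N}" and i': "i' \<in> {1..N}" and eq: "\<sigma> i = \<sigma> i'" and "i \<noteq> i'"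
    then have "card {i, i'} \<le> card {k\<in>{1..N}. \<sigma> k = \<sigma> i}"
      by (intro card_mono) auto
    moreover have "(\<Sum>k\<in>{1..N}. x k (\<sigma> i)) = int (card {k\<in>{1..N}. \<sigma> k = \<sigma> i})"
      using x_eq maps[OF i] sum_perm_matrix_col[of "{1..N}" \<sigma> "\<sigma> i"] by simp
    ultimately show False
      using col maps[OF i] \<open>i \<noteq> i'\<close> by fastforce
  qed
  moreover have "\<sigma> ` {1..N} \<subseteq> {1..N}"
    using maps by blast
  ultimately show "bij_betw \<sigma> {1..N} {1..N}"
    using endo_inj_surj[of "{1..N}" \<sigma>] by (simp add: bij_betw_def)
qed

lemma sum_perm_matrix_col_bij:
  assumes "finite A" "bij_betw f A A" "j \<in> A"
  shows "(\<Sum>i\<in>A. perm_matrix f i j) = 1"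
proof -
  obtain i where "i \<in> A" "f i = j"
    using assms(2,3) by (metis bij_betw_iff_bijections)
  then have "{k\<in>A. f k = j} = {i}"
    using assms(2) by (auto simp: bij_betw_def dest: inj_onD)
  then show ?thesis
    using assms(1) by (simp add: sum_perm_matrix_col)
qed

lemma perm_matrix_zero_across_weights_iff:
  assumes "\<forall>i\<in>A. f i \<in> A"
  shows "(\<forall>i\<in>A. \<forall>j\<in>A. w i \<noteq> w j \<longrightarrow> perm_matrix f i j = 0) \<longleftrightarrow> (\<forall>i\<in>A. w (f i) = w i)"
  using assms unfolding perm_matrix_def by fastforce

lemma feasible_cong:
  assumes cand: "\<forall>c\<in>{1..C}. cand c \<subseteq> {1..N}" and beta: "\<forall>b\<in>{1..B}. beta b \<subseteq> {1..N}"
    and eq: "\<forall>i\<in>{1..N}. \<forall>j\<in>{1..N}. x i j = y i j"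
  shows "feasible N C cand v B beta x \<longleftrightarrow> feasible N C cand v B beta y"
proof -
  have "(\<Sum>i\<in>cand c. \<Sum>j\<in>beta b. x i j) = (\<Sum>i\<in>cand c. \<Sum>j\<in>beta b. y i j)"
    if "b \<in> {1..B}" "c \<in> {1..C}" for b c
    using that cand beta eq by (intro sum.cong refl) blast
  moreover have "(\<Sum>j\<in>{1..N}. x i j) = (\<Sum>j\<in>{1..N}. y i j)" if "i \<in> {1..N}" for i
    using that eq by (intro sum.cong) auto
  moreover have "(\<Sum>i\<in>{1..N}. x i j) = (\<Sum>i\<in>{1..N}. y i j)" if "j \<in> {1..N}" for j
    using that eq by (intro sum.cong) auto
  moreover have "(\<Sum>i\<in>{1..N}. x i i) = (\<Sum>i\<in>{1..N}. y i i)"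
    using eq by (intro sum.cong) auto
  ultimately show ?thesis
    unfolding feasible_def using eq by auto
qed

text \<open>Constraints (3)--(5) for the permutation matrix of f; (1) and (2) amount to f being a bijection.\<close>

definition admissible_perm :: "nat \<Rightarrow> nat \<Rightarrow> (nat \<Rightarrow> nat set) \<Rightarrow> (nat \<Rightarrow> nat) \<Rightarrow> nat
    \<Rightarrow> (nat \<Rightarrow> nat set) \<Rightarrow> (nat \<Rightarrow> nat) \<Rightarrow> bool" where
  "admissible_perm N C cand v B beta f \<longleftrightarrow>
     bij_betw f {1..N} {1..N} \<and> 2 \<le> card (moved f {1..N}) \<and>
     (\<forall>b\<in>{1..B}. \<forall>c\<in>{1..C}. card {i\<in>cand c. f i \<in> beta b} \<le> v c) \<and>
     (\<forall>i\<in>{1..N}. card {b\<in>{1..B}. f i \<in> beta b} = card {b\<in>{1..B}. i \<in> beta b})"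

lemma admissible_perm_not_id:
  assumes "admissible_perm N C cand v B beta f"
  shows "\<exists>i\<in>{1..N}. f i \<noteq> i"
proof -
  have "moved f {1..N} \<noteq> {}"
    using assms unfolding admissible_perm_def by auto
  then show ?thesis
    unfolding moved_def by blast
qed

lemma feasible_perm_matrix_iff:
  assumes bij: "bij_betw f {1..N} {1..N}"
    and cand: "\<forall>c\<in>{1..C}. cand c \<subseteq> {1..N}" and beta: "\<forall>b\<in>{1..B}. beta b \<subseteq> {1..N}"
  shows "feasible N C cand v B beta (perm_matrix f) \<longleftrightarrow> admissible_perm N C cand v B beta f"
proof -
  have maps: "f i \<in> {1..N}" if "i \<in> {1..N}" for i
    using bij that bij_betwE by blast
  have rows: "(\<Sum>j\<in>{1..N}. perm_matrix f i j) = 1" if "i \<in> {1..N}" for i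
    using maps[OF that] by (simp add: sum_perm_matrix_row)
  have cols: "(\<Sum>i\<in>{1..N}. perm_matrix f i j) = 1" if "j \<in> {1..N}" for j
    using finite_atLeastAtMost bij that by (rule sum_perm_matrix_col_bij)
  have diag: "(\<Sum>i\<in>{1..N}. perm_matrix f i i) \<le> int N - 2 \<longleftrightarrow> 2 \<le> card (moved f {1..N})"
  proof -
    have "(\<Sum>i\<in>{1..N}. perm_matrix f i i) = int (card {i\<in>{1..N}. f i = i})"
      unfolding perm_matrix_def by (rule sum_of_bool_eq_card) simp
    moreover have "card (moved f {1..N}) \<le> card {1..N}"
      by (rule card_mono) (auto simp: moved_def)
    ultimately show ?thesis
      using card_fixed_points[of "{1..N}" f] by simp
  qed
  have limits: "(\<Sum>i\<in>cand c. \<Sum>j\<in>beta b. perm_matrix f i j) = int (card {i\<in>cand c. f i \<in> beta b})"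
    if "b \<in> {1..B}" "c \<in> {1..C}" for b c
  proof -
    have "finite (beta b)" "finite (cand c)"
      using that cand beta by (meson finite_atLeastAtMost finite_subset)+
    then show ?thesis
      by (simp add: sum_perm_matrix_row sum_of_bool_eq_card del: sum_of_bool_eq)
  qed
  have counts: "(\<forall>i\<in>{1..N}. \<forall>j\<in>{1..N}. card {b\<in>{1..B}. i \<in> beta b} \<noteq> card {b\<in>{1..B}. j \<in> beta b}
        \<longrightarrow> perm_matrix f i j = 0)
      \<longleftrightarrow> (\<forall>i\<in>{1..N}. card {b\<in>{1..B}. f i \<in> beta b} = card {b\<in>{1..B}. i \<in> beta b})"
    using perm_matrix_zero_across_weights_iff[of "{1..N}" f "\<lambda>i. card {b\<in>{1..B}. i \<in> beta b}"] maps
    by blast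
  have entries: "\<forall>i\<in>{1..N}. \<forall>j\<in>{1..N}. perm_matrix f i j \<in> {0, 1}"
    by (simp add: perm_matrix_def)
  show ?thesis
    unfolding feasible_def admissible_perm_def
    using bij entries rows cols diag limits counts by auto
qed

lemma Tsigma_eq_Tstar:
  assumes inj: "inj_on \<sigma> (cand c)"
    and limit: "\<forall>b\<in>{1..B}. card {j\<in>cand c. \<sigma> j \<in> beta b} \<le> v c"
    and valid: "\<forall>b\<in>{1..B}. card (cand c \<inter> beta b) \<le> v c"
    and count: "card {b\<in>{1..B}. \<sigma> i \<in> beta b} = card {b\<in>{1..B}. i \<in> beta b}"
  shows "Tsigma \<sigma> cand v B beta c i = Tstar cand v B beta c i"
proof -
  have "card {\<sigma> j |j. j \<in> cand c \<and> \<sigma> j \<in> beta b} = card {j\<in>cand c. \<sigma> j \<in> beta b}" for b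
  proof -
    have "{\<sigma> j |j. j \<in> cand c \<and> \<sigma> j \<in> beta b} = \<sigma> ` {j\<in>cand c. \<sigma> j \<in> beta b}"
      by auto
    then show ?thesis
      using inj by (simp add: card_image inj_on_subset)
  qed
  then show ?thesis
    unfolding Tsigma_def Tstar_def using limit valid count by (simp cong: conj_cong)
qed

lemma not_one_component_closed_part:
  assumes "V \<noteq> {}" "\<not> one_component V E"
  obtains K where "K \<subseteq> V" "K \<noteq> {}" "V - K \<noteq> {}" "\<forall>(c, c')\<in>E. c \<in> K \<longrightarrow> c' \<in> V \<longrightarrow> c' \<in> K"
proof -
  let ?R = "Restr (E \<union> E\<inverse>) V"
  obtain a b where a: "a \<in> V" and b: "b \<in> V" and "(a, b) \<notin> ?R\<^sup>*"
    using assms unfolding one_component_def by blast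
  define K where "K = {c\<in>V. (a, c) \<in> ?R\<^sup>*}"
  have "K \<subseteq> V" "K \<noteq> {}" "V - K \<noteq> {}"
    unfolding K_def using a b \<open>(a, b) \<notin> ?R\<^sup>*\<close> by auto
  moreover have "\<forall>(c, c')\<in>E. c \<in> K \<longrightarrow> c' \<in> V \<longrightarrow> c' \<in> K"
    unfolding K_def by (auto intro: rtrancl_into_rtrancl)
  ultimately show thesis
    using that by blast
qed

lemma ballot_style_cand_subset:
  "is_ballot_style N C cand v \<Longrightarrow> c \<in> {1..C} \<Longrightarrow> cand c \<subseteq> {1..N}"
  unfolding is_ballot_style_def by blast

lemma ballot_style_contest_of:
  assumes "is_ballot_style N C cand v" "i \<in> {1..N}"
  obtains c where "c \<in> {1..C}" "i \<in> cand c"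
  using assms unfolding is_ballot_style_def by blast

lemma ballot_style_disjoint:
  "is_ballot_style N C cand v \<Longrightarrow> c \<in> {1..C} \<Longrightarrow> c' \<in> {1..C} \<Longrightarrow> i \<in> cand c \<Longrightarrow> i \<in> cand c'
    \<Longrightarrow> c = c'"
  unfolding is_ballot_style_def by blast

lemma closed_contests_invariant:
  assumes style: "is_ballot_style N C cand v" and bij: "bij_betw \<sigma> {1..N} {1..N}"
    and KV: "K \<subseteq> graph_V \<sigma> C cand"
    and closed: "\<forall>(c, c')\<in>graph_E \<sigma> C cand. c \<in> K \<longrightarrow> c' \<in> graph_V \<sigma> C cand \<longrightarrow> c' \<in> K"
  shows "\<sigma> ` (\<Union>(cand ` K)) \<subseteq> \<Union>(cand ` K)"
proof (rule image_subsetI)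
  fix i assume "i \<in> \<Union>(cand ` K)"
  then obtain c where c: "c \<in> K" "i \<in> cand c" by blast
  show "\<sigma> i \<in> \<Union>(cand ` K)"
  proof (cases "\<sigma> i = i")
    case False
    have cC: "c \<in> {1..C}"
      using c KV by (auto simp: graph_V_def)
    then have i: "i \<in> {1..N}"
      using c style by (meson ballot_style_cand_subset subsetD)
    then have si: "\<sigma> i \<in> {1..N}"
      using bij bij_betwE by blast
    obtain c' where c': "c' \<in> {1..C}" "\<sigma> i \<in> cand c'"
      using style si by (rule ballot_style_contest_of)
    have "\<sigma> (\<sigma> i) \<noteq> \<sigma> i"
      using inj_onD[OF bij_betw_imp_inj_on[OF bij] _ si i] False by blast
    then have "c' \<in> graph_V \<sigma> C cand"
      using c' unfolding graph_V_def by blast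
    moreover have "(c, c') \<in> graph_E \<sigma> C cand"
      using cC c c' unfolding graph_E_def by blast
    ultimately have "c' \<in> K"
      using closed c(1) by blast
    with c' show ?thesis
      by blast
  qed (use c in auto)
qed

lemma bij_betw_restrict_perm:
  assumes "finite A" "bij_betw f A A" "S \<subseteq> A" "f ` S \<subseteq> S"
  shows "bij_betw (restrict_perm f S) A A"
proof -
  have inj: "inj_on f A" using assms(2) bij_betw_imp_inj_on by blast
  have "inj_on (restrict_perm f S) A"
  proof (rule inj_onI)
    fix i i' assume "i \<in> A" "i' \<in> A" "restrict_perm f S i = restrict_perm f S i'"
    then show "i = i'"
      using assms(3,4) inj_onD[OF inj] unfolding restrict_perm_def by (auto split: if_splits)
  qed
  moreover have "restrict_perm f S ` A \<subseteq> A"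
    using assms(2,3) bij_betwE unfolding restrict_perm_def by fastforce
  ultimately show ?thesis
    using endo_inj_surj[OF assms(1)] by (simp add: bij_betw_def)
qed

lemma moved_restrict_perm: "S \<subseteq> A \<Longrightarrow> moved (restrict_perm f S) A = moved f S"
  by (auto simp: moved_def restrict_perm_def)

lemma admissible_restrict_perm:
  assumes style: "is_ballot_style N C cand v"
    and deck: "\<forall>b\<in>{1..B}. beta b \<in> valid_ballots N C cand v"
    and adm: "admissible_perm N C cand v B beta \<sigma>"
    and K: "K \<subseteq> {1..C}" and inv: "\<sigma> ` (\<Union>(cand ` K)) \<subseteq> \<Union>(cand ` K)"
    and moves: "i \<in> \<Union>(cand ` K)" "\<sigma> i \<noteq> i"
  shows "admissible_perm N C cand v B beta (restrict_perm \<sigma> (\<Union>(cand ` K)))"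
proof -
  let ?S = "\<Union>(cand ` K)" and ?f = "restrict_perm \<sigma> (\<Union>(cand ` K))"
  have bij: "bij_betw \<sigma> {1..N} {1..N}" using adm unfolding admissible_perm_def by blast
  have S: "?S \<subseteq> {1..N}" using K style ballot_style_cand_subset by blast
  have "2 \<le> card (moved ?f {1..N})"
    using two_le_card_moved[OF _ _ inv moves] S bij moved_restrict_perm[OF S]
    by (metis bij_betw_imp_inj_on finite_atLeastAtMost finite_subset inj_on_subset)
  moreover have "card {j\<in>cand c. ?f j \<in> beta b} \<le> v c" if b: "b \<in> {1..B}" and c: "c \<in> {1..C}" for b c
  proof (cases "c \<in> K")
    case True
    then have "{j\<in>cand c. ?f j \<in> beta b} = {j\<in>cand c. \<sigma> j \<in> beta b}"
      unfolding restrict_perm_def by auto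
    then show ?thesis using adm b c unfolding admissible_perm_def by simp
  next
    case False
    then have "cand c \<inter> ?S = {}"
      using K c style ballot_style_disjoint by blast
    then have "{j\<in>cand c. ?f j \<in> beta b} = cand c \<inter> beta b"
      unfolding restrict_perm_def by auto
    then show ?thesis using deck b c unfolding valid_ballots_def by simp
  qed
  ultimately show ?thesis
    using bij_betw_restrict_perm[OF _ bij S inv] adm
    unfolding admissible_perm_def by (simp add: restrict_perm_def)
qed

lemma minimal_admissible_perm_one_component:
  assumes style: "is_ballot_style N C cand v"
    and deck: "\<forall>b\<in>{1..B}. beta b \<in> valid_ballots N C cand v"
    and adm: "admissible_perm N C cand v B beta \<sigma>"
    and min: "\<And>f. admissible_perm N C cand v B beta f \<Longrightarrow> card (moved \<sigma> {1..N}) \<le> card (moved f {1..N})"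
  shows "one_component (graph_V \<sigma> C cand) (graph_E \<sigma> C cand)"
proof (rule ccontr)
  let ?V = "graph_V \<sigma> C cand" and ?E = "graph_E \<sigma> C cand"
  assume disconnected: "\<not> one_component ?V ?E"
  have bij: "bij_betw \<sigma> {1..N} {1..N}" using adm unfolding admissible_perm_def by blast
  obtain i where "i \<in> {1..N}" "\<sigma> i \<noteq> i"
    using admissible_perm_not_id[OF adm] by blast
  then have "?V \<noteq> {}"
    using style ballot_style_contest_of unfolding graph_V_def by blast
  then obtain K where KV: "K \<subseteq> ?V" and "K \<noteq> {}" "?V - K \<noteq> {}"
    and closed: "\<forall>(c, c')\<in>?E. c \<in> K \<longrightarrow> c' \<in> ?V \<longrightarrow> c' \<in> K"
    using disconnected by (rule not_one_component_closed_part)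
  let ?S = "\<Union>(cand ` K)"
  have KC: "K \<subseteq> {1..C}" and S: "?S \<subseteq> {1..N}"
    using KV style ballot_style_cand_subset unfolding graph_V_def by blast+
  have inv: "\<sigma> ` ?S \<subseteq> ?S"
    using closed_contests_invariant[OF style bij KV closed] .
  obtain k where "k \<in> ?S" "\<sigma> k \<noteq> k"
    using KV \<open>K \<noteq> {}\<close> unfolding graph_V_def by blast
  then have "admissible_perm N C cand v B beta (restrict_perm \<sigma> ?S)"
    by (rule admissible_restrict_perm[OF style deck adm KC inv])
  then have "card (moved \<sigma> {1..N}) \<le> card (moved \<sigma> ?S)"
    using min moved_restrict_perm[OF S] by metis
  moreover obtain j where "j \<in> moved \<sigma> {1..N}" "j \<notin> ?S"
  proof -
    obtain c j where c: "c \<in> ?V - K" and j: "j \<in> cand c" "\<sigma> j \<noteq> j"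
      using \<open>?V - K \<noteq> {}\<close> unfolding graph_V_def by blast
    then have "j \<notin> ?S"
      using KC style ballot_style_disjoint unfolding graph_V_def by blast
    moreover have "j \<in> {1..N}"
      using c j style ballot_style_cand_subset unfolding graph_V_def by blast
    ultimately show thesis using that j unfolding moved_def by blast
  qed
  then have "moved \<sigma> ?S \<subset> moved \<sigma> {1..N}"
    using S unfolding moved_def by blast
  then have "card (moved \<sigma> ?S) < card (moved \<sigma> {1..N})"
    by (rule psubset_card_mono[rotated]) (simp add: moved_def)
  ultimately show False by simp
qed

lemma optimal_solution_minimal_admissible_perm:
  assumes style: "is_ballot_style N C cand v"
    and deck: "\<forall>b\<in>{1..B}. beta b \<in> valid_ballots N C cand v"
    and opt: "optimal N C cand v B beta x"
    and \<sigma>: "\<forall>i\<in>{1..N}. \<forall>j\<in>{1..N}. \<sigma> i = j \<longleftrightarrow> x i j = 1"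
  shows "admissible_perm N C cand v B beta \<sigma>"
    and "\<And>f. admissible_perm N C cand v B beta f \<Longrightarrow> card (moved \<sigma> {1..N}) \<le> card (moved f {1..N})"
proof -
  have feasible: "feasible N C cand v B beta x"
    and optimal: "\<And>y. feasible N C cand v B beta y \<Longrightarrow> objective N x \<le> objective N y"
    using opt unfolding optimal_def by auto
  have cand: "\<forall>c\<in>{1..C}. cand c \<subseteq> {1..N}" and beta: "\<forall>b\<in>{1..B}. beta b \<subseteq> {1..N}"
    using style ballot_style_cand_subset deck unfolding valid_ballots_def by blast+
  have "\<forall>i\<in>{1..N}. \<forall>j\<in>{1..N}. x i j \<in> {0, 1}"
    and "\<forall>i\<in>{1..N}. (\<Sum>j\<in>{1..N}. x i j) = 1" and "\<forall>j\<in>{1..N}. (\<Sum>i\<in>{1..N}. x i j) = 1"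
    using feasible unfolding feasible_def by blast+
  then have bij: "bij_betw \<sigma> {1..N} {1..N}"
    and x: "\<forall>i\<in>{1..N}. \<forall>j\<in>{1..N}. x i j = perm_matrix \<sigma> i j"
    using permutation_of_perm_matrix[OF _ _ _ \<sigma>] by blast+
  show "admissible_perm N C cand v B beta \<sigma>"
    using feasible feasible_cong[OF cand beta x] feasible_perm_matrix_iff[OF bij cand beta] by simp
  have "objective N x = objective N (perm_matrix \<sigma>)"
    unfolding objective_def using x by (intro sum.cong) auto
  then have objective_x: "objective N x = int (card (moved \<sigma> {1..N}))"
    using bij bij_betwE objective_perm_matrix by metis
  show "card (moved \<sigma> {1..N}) \<le> card (moved f {1..N})"
    if adm_f: "admissible_perm N C cand v B beta f" for f
  proof -
    have bij_f: "bij_betw f {1..N} {1..N}"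
      using adm_f unfolding admissible_perm_def by blast
    then have "feasible N C cand v B beta (perm_matrix f)"
      using adm_f feasible_perm_matrix_iff[OF _ cand beta] by blast
    moreover have "objective N (perm_matrix f) = int (card (moved f {1..N}))"
      using bij_f bij_betwE objective_perm_matrix by metis
    ultimately show ?thesis
      using optimal objective_x by fastforce
  qed
qed

lemma admissible_perm_Tsigma_eq_Tstar:
  assumes style: "is_ballot_style N C cand v"
    and deck: "\<forall>b\<in>{1..B}. beta b \<in> valid_ballots N C cand v"
    and adm: "admissible_perm N C cand v B beta \<sigma>"
    and c: "c \<in> {1..C}" and i: "i \<in> cand c"
  shows "Tsigma \<sigma> cand v B beta c i = Tstar cand v B beta c i"
proof (rule Tsigma_eq_Tstar)
  have cand: "cand c \<subseteq> {1..N}"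
    using style c by (rule ballot_style_cand_subset)
  then show "inj_on \<sigma> (cand c)"
    using adm unfolding admissible_perm_def by (meson bij_betw_imp_inj_on inj_on_subset)
  show "\<forall>b\<in>{1..B}. card {j\<in>cand c. \<sigma> j \<in> beta b} \<le> v c"
    using adm c unfolding admissible_perm_def by blast
  show "\<forall>b\<in>{1..B}. card (cand c \<inter> beta b) \<le> v c"
    using deck c unfolding valid_ballots_def by blast
  show "card {b\<in>{1..B}. \<sigma> i \<in> beta b} = card {b\<in>{1..B}. i \<in> beta b}"
    using adm cand i unfolding admissible_perm_def by blast
qed

theorem theorem3:
  fixes N C B :: nat and cand :: "nat \<Rightarrow> nat set" and v :: "nat \<Rightarrow> nat"
    and beta :: "nat \<Rightarrow> nat set" and x :: "nat \<Rightarrow> nat \<Rightarrow> int" and \<sigma> :: "nat \<Rightarrow> nat"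
  assumes style: "is_ballot_style N C cand v"
    and deck: "\<forall>b\<in>{1..B}. beta b \<in> valid_ballots N C cand v"
    and opt: "optimal N C cand v B beta x"
    and sigma_def: "\<forall>i\<in>{1..N}. \<forall>j\<in>{1..N}. \<sigma> i = j \<longleftrightarrow> x i j = 1"
  shows "\<sigma> \<in> Sigma_set N
    \<and> (\<forall>c\<in>{1..C}. \<forall>i\<in>cand c. Tsigma \<sigma> cand v B beta c i = Tstar cand v B beta c i)
    \<and> one_component (graph_V \<sigma> C cand) (graph_E \<sigma> C cand)"
proof -
  note minimal = optimal_solution_minimal_admissible_perm[OF style deck opt sigma_def]
  have "\<sigma> \<in> Sigma_set N"
    using minimal(1) admissible_perm_not_id unfolding Sigma_set_def admissible_perm_def by blast
  moreover have "\<forall>c\<in>{1..C}. \<forall>i\<in>cand c. Tsigma \<sigma> cand v B beta c i = Tstar cand v B beta c i"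
    using admissible_perm_Tsigma_eq_Tstar[OF style deck minimal(1)] by blast
  moreover have "one_component (graph_V \<sigma> C cand) (graph_E \<sigma> C cand)"
    using minimal_admissible_perm_one_component[OF style deck minimal] .
  ultimately show ?thesis
    by blast
qed

end
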